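(* Let $F$ be a finite rooted poset with root $\bot$ and height greater than $1$, such that $F$ validates $\mathbf{PL}_n$. Let $s,t$ be top (maximal) elements of $F$. Then there is a path $a_0a_1\cdots a_m$ with $a_0=s$, $a_m=t$, all $a_i\in{\uparrow^\circ\bot}$, such that for each $i$: ${\uparrow^\circ a_i}=\varnothing$ when $i$ is even, and ${\uparrow^\circ a_i}=\{a_{i-1},a_{i+1}\}$ when $i$ is odd.
   Context: For $x$ in a poset, ${\uparrow^\circ x}=\{y:y>x\}$. A path is a sequence $a_0\cdots a_m$ in which for each $i$ either $a_i<a_{i+1}$ or $a_i>a_{i+1}$. The height of a poset is the supremum of $|C|-1$ over chains $C$. A p-morphism $f$ satisfies $f(\uparrow x)=\uparrow f(x)$; an up-reduction of $F$ onto $G$ is a surjective p-morphism from an upset of $F$ onto $G$. For a finite rooted poset $Q$, $\chi(Q)$ is its Jankov–Fine formula: a frame validates $\chi(Q)$ iff it has no up-reduction onto $Q$. $\mathbf{BD}_n$ is the logic of all finite frames of height at most $n$. The 3-fork is $\{r,a,b,c\}$ with $r<a,r<b,r<c$ only; the Scott frame is $\{r,u_1,u_2,v\}$ with $r<u_1<u_2$, $r<v$ (and $r<u_2$) only. $\mathbf{PL}_n$ is the smallest intermediate logic containing $\mathbf{BD}_n$, $\chi(\text{3-fork})$ and $\chi(\text{Scott frame})$. *)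

theory Defs
  imports Main "HOL-Library.Extended_Nat"
begin

definition poset :: "'a set \<Rightarrow> ('a \<Rightarrow> 'a \<Rightarrow> bool) \<Rightarrow> bool" where
  "poset W R \<longleftrightarrow> (\<forall>x\<in>W. R x x)
     \<and> (\<forall>x\<in>W. \<forall>y\<in>W. R x y \<and> R y x \<longrightarrow> x = y)
     \<and> (\<forall>x\<in>W. \<forall>y\<in>W. \<forall>z\<in>W. R x y \<and> R y z \<longrightarrow> R x z)"

definition less_in :: "('a \<Rightarrow> 'a \<Rightarrow> bool) \<Rightarrow> 'a \<Rightarrow> 'a \<Rightarrow> bool" where
  "less_in R x y \<longleftrightarrow> R x y \<and> x \<noteq> y"

definition sup_set :: "'a set \<Rightarrow> ('a \<Rightarrow> 'a \<Rightarrow> bool) \<Rightarrow> 'a \<Rightarrow> 'a set" where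
  "sup_set W R x = {y\<in>W. less_in R x y}"

definition up_set :: "'a set \<Rightarrow> ('a \<Rightarrow> 'a \<Rightarrow> bool) \<Rightarrow> 'a \<Rightarrow> 'a set" where
  "up_set W R x = {y\<in>W. R x y}"

definition is_upset :: "'a set \<Rightarrow> ('a \<Rightarrow> 'a \<Rightarrow> bool) \<Rightarrow> 'a set \<Rightarrow> bool" where
  "is_upset W R U \<longleftrightarrow> U \<subseteq> W \<and> (\<forall>x\<in>U. \<forall>y\<in>W. R x y \<longrightarrow> y \<in> U)"

definition rooted_at :: "'a set \<Rightarrow> ('a \<Rightarrow> 'a \<Rightarrow> bool) \<Rightarrow> 'a \<Rightarrow> bool" where
  "rooted_at W R r \<longleftrightarrow> r \<in> W \<and> (\<forall>x\<in>W. R r x)"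

definition is_chain :: "'a set \<Rightarrow> ('a \<Rightarrow> 'a \<Rightarrow> bool) \<Rightarrow> 'a set \<Rightarrow> bool" where
  "is_chain W R C \<longleftrightarrow> C \<subseteq> W \<and> (\<forall>x\<in>C. \<forall>y\<in>C. R x y \<or> R y x)"

definition height :: "'a set \<Rightarrow> ('a \<Rightarrow> 'a \<Rightarrow> bool) \<Rightarrow> enat" where
  "height W R = Sup {enat (card C) - 1 | C. is_chain W R C \<and> finite C \<and> C \<noteq> {}}"

definition is_top :: "'a set \<Rightarrow> ('a \<Rightarrow> 'a \<Rightarrow> bool) \<Rightarrow> 'a \<Rightarrow> bool" where
  "is_top W R x \<longleftrightarrow> x \<in> W \<and> (\<forall>y\<in>W. R x y \<longrightarrow> y = x)"

definition p_morphism ::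
  "'a set \<Rightarrow> ('a \<Rightarrow> 'a \<Rightarrow> bool) \<Rightarrow> 'b set \<Rightarrow> ('b \<Rightarrow> 'b \<Rightarrow> bool) \<Rightarrow> ('a \<Rightarrow> 'b) \<Rightarrow> bool" where
  "p_morphism U R V S f \<longleftrightarrow> f ` U \<subseteq> V \<and> (\<forall>x\<in>U. f ` up_set U R x = up_set V S (f x))"

definition up_reduction ::
  "'a set \<Rightarrow> ('a \<Rightarrow> 'a \<Rightarrow> bool) \<Rightarrow> 'b set \<Rightarrow> ('b \<Rightarrow> 'b \<Rightarrow> bool) \<Rightarrow> ('a \<Rightarrow> 'b) \<Rightarrow> bool" where
  "up_reduction W R V S f \<longleftrightarrow> (\<exists>U. is_upset W R U \<and> p_morphism U R V S f \<and> f ` U = V)"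

definition has_up_reduction ::
  "'a set \<Rightarrow> ('a \<Rightarrow> 'a \<Rightarrow> bool) \<Rightarrow> 'b set \<Rightarrow> ('b \<Rightarrow> 'b \<Rightarrow> bool) \<Rightarrow> bool" where
  "has_up_reduction W R V S \<longleftrightarrow> (\<exists>f. up_reduction W R V S f)"

text \<open>3-fork: r = 0, a = 1, b = 2, c = 3\<close>
definition fork3_W :: "nat set" where "fork3_W = {0,1,2,3}"
definition fork3_R :: "nat \<Rightarrow> nat \<Rightarrow> bool" where
  "fork3_R x y \<longleftrightarrow> x = y \<or> x = 0"

text \<open>Scott frame: r = 0, u1 = 1, u2 = 2, v = 3\<close>
definition scott_W :: "nat set" where "scott_W = {0,1,2,3}"
definition scott_R :: "nat \<Rightarrow> nat \<Rightarrow> bool" where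
  "scott_R x y \<longleftrightarrow> x = y \<or> x = 0 \<or> (x = 1 \<and> y = 2)"

datatype fm = Var nat | Bot | And fm fm | Or fm fm | Imp fm fm

fun forces :: "'a set \<Rightarrow> ('a \<Rightarrow> 'a \<Rightarrow> bool) \<Rightarrow> (nat \<Rightarrow> 'a set) \<Rightarrow> 'a \<Rightarrow> fm \<Rightarrow> bool" where
  "forces W R V x (Var p) \<longleftrightarrow> x \<in> V p"
| "forces W R V x Bot \<longleftrightarrow> False"
| "forces W R V x (And a b) \<longleftrightarrow> forces W R V x a \<and> forces W R V x b"
| "forces W R V x (Or a b) \<longleftrightarrow> forces W R V x a \<or> forces W R V x b"
| "forces W R V x (Imp a b) \<longleftrightarrow>
     (\<forall>y\<in>W. R x y \<longrightarrow> forces W R V y a \<longrightarrow> forces W R V y b)"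

definition valid_in :: "'a set \<Rightarrow> ('a \<Rightarrow> 'a \<Rightarrow> bool) \<Rightarrow> fm \<Rightarrow> bool" where
  "valid_in W R \<phi> \<longleftrightarrow>
     (\<forall>V. (\<forall>p. is_upset W R (V p)) \<longrightarrow> (\<forall>x\<in>W. forces W R V x \<phi>))"

text \<open>BD_n: the logic of all finite frames of height at most n (finite frames are,
  up to isomorphism, frames on subsets of nat)\<close>
definition BD :: "nat \<Rightarrow> fm set" where
  "BD n = {\<phi>. \<forall>(W::nat set) R. finite W \<and> W \<noteq> {} \<and> poset W R \<and> height W R \<le> enat n
               \<longrightarrow> valid_in W R \<phi>}"

text \<open>A frame validates PL_n = the smallest intermediate logic containing BD_n,
  chi(3-fork) and chi(Scott frame).  Frame validity is closed under modus ponens and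
  substitution, so this is validity of BD_n together with chi(3-fork) and chi(Scott);
  a frame validates chi(Q) iff it has no up-reduction onto Q.\<close>
definition validates_PL :: "nat \<Rightarrow> 'a set \<Rightarrow> ('a \<Rightarrow> 'a \<Rightarrow> bool) \<Rightarrow> bool" where
  "validates_PL n W R \<longleftrightarrow> (\<forall>\<phi>\<in>BD n. valid_in W R \<phi>)
     \<and> \<not> has_up_reduction W R fork3_W fork3_R
     \<and> \<not> has_up_reduction W R scott_W scott_R"

end

theory Submission
  imports Defs
begin

text \<open>The tops reachable from s by a path of the required shape form a set A that is closed under
  crossing a point above the root whose strict up-set is a pair of tops.  Such a set contains
  every top.  Otherwise take a maximal point y that sees tops both in A and outside A, and split
  its strict up-set according to whether all tops above a point lie in A.  The two parts are
  disjoint nonempty upsets; a non-top in either part yields an up-reduction onto the Scott frame,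
  and a third top yields one onto the 3-fork.  So the strict up-set of y is a pair of tops; as
  height > 1 forbids this for the root, y lies above the root and closure puts the outside top
  into A.\<close>

lemma poset_refl: "poset W R \<Longrightarrow> x \<in> W \<Longrightarrow> R x x"
  unfolding poset_def by blast

lemma poset_antisym: "poset W R \<Longrightarrow> x \<in> W \<Longrightarrow> y \<in> W \<Longrightarrow> R x y \<Longrightarrow> R y x \<Longrightarrow> x = y"
  unfolding poset_def by blast

lemma poset_trans:
  "poset W R \<Longrightarrow> x \<in> W \<Longrightarrow> y \<in> W \<Longrightarrow> z \<in> W \<Longrightarrow> R x y \<Longrightarrow> R y z \<Longrightarrow> R x z"
  unfolding poset_def by blast

lemma up_set_eq_insert_sup_set:
  "poset W R \<Longrightarrow> y \<in> W \<Longrightarrow> up_set W R y = insert y (sup_set W R y)"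
  using poset_refl[of W R y] unfolding up_set_def sup_set_def less_in_def by auto

lemma is_upset_up_set: "poset W R \<Longrightarrow> y \<in> W \<Longrightarrow> is_upset W R (up_set W R y)"
  unfolding poset_def is_upset_def up_set_def by blast

lemma is_upset_sup_set: "poset W R \<Longrightarrow> y \<in> W \<Longrightarrow> is_upset W R (sup_set W R y)"
  unfolding poset_def is_upset_def sup_set_def less_in_def by blast

lemma up_set_subset_upset: "is_upset W R U \<Longrightarrow> x \<in> U \<Longrightarrow> up_set W R x \<subseteq> U"
  unfolding is_upset_def up_set_def by blast

lemma up_set_within_upset:
  "is_upset W R U \<Longrightarrow> x \<in> U \<Longrightarrow> up_set U R x = up_set W R x"
  unfolding is_upset_def up_set_def by blast

lemma up_set_top: "poset W R \<Longrightarrow> is_top W R x \<Longrightarrow> up_set W R x = {x}"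
  using poset_refl unfolding is_top_def up_set_def by fastforce

lemma sup_set_top: "is_top W R x \<Longrightarrow> sup_set W R x = {}"
  unfolding is_top_def sup_set_def less_in_def by auto

lemma card_up_set_less:
  assumes "finite W" "poset W R" "y \<in> W" "z \<in> sup_set W R y"
  shows "card (up_set W R z) < card (up_set W R y)"
proof (rule psubset_card_mono)
  show "finite (up_set W R y)" using \<open>finite W\<close> unfolding up_set_def by simp
  have "z \<in> W" "R y z" "y \<noteq> z" using assms(4) unfolding sup_set_def less_in_def by auto
  then show "up_set W R z \<subset> up_set W R y"
    using assms(2,3) poset_refl[of W R y] poset_trans[of W R y z] poset_antisym[of W R y z]
    unfolding up_set_def by blast
qed

lemma finite_poset_obtain_maximal:
  assumes "finite W" "poset W R" "x \<in> W" "P x"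
  obtains y where "y \<in> W" "P y" "\<forall>z\<in>sup_set W R y. \<not> P z"
proof -
  obtain y where y: "y \<in> W \<and> P y"
    and least: "\<And>z. z \<in> W \<and> P z \<Longrightarrow> card (up_set W R y) \<le> card (up_set W R z)"
    using ex_has_least_nat[of "\<lambda>z. z \<in> W \<and> P z" x "\<lambda>z. card (up_set W R z)"] assms(3,4)
    by blast
  have "\<not> P z" if "z \<in> sup_set W R y" for z
    using that least[of z] card_up_set_less[OF assms(1,2)] y
    unfolding sup_set_def by fastforce
  with y that show ?thesis by blast
qed

lemma finite_poset_top_above:
  assumes "finite W" "poset W R" "x \<in> W"
  obtains t where "is_top W R t" "R x t"
proof -
  obtain y where y: "y \<in> W" "R x y" and max: "\<forall>z\<in>sup_set W R y. \<not> R x z"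
    using finite_poset_obtain_maximal[of W R x "R x"] assms poset_refl by metis
  have "is_top W R y"
    unfolding is_top_def using y max assms(2,3) poset_trans[of W R x y]
    unfolding sup_set_def less_in_def by blast
  with y that show ?thesis by blast
qed

lemma finite_poset_top_in_upset:
  assumes "finite W" "poset W R" "is_upset W R U" "x \<in> U"
  obtains t where "t \<in> U" "is_top W R t" "R x t"
proof -
  have "x \<in> W" using assms(3,4) unfolding is_upset_def by blast
  then obtain t where "is_top W R t" "R x t" using finite_poset_top_above[OF assms(1,2)] by blast
  with assms(3,4) that show ?thesis unfolding is_upset_def is_top_def by blast
qed

lemma height_gt_1_obtain_chain:
  assumes "height W R > 1"
  obtains C where "is_chain W R C" "finite C" "3 \<le> card C"
proof -
  from assms obtain C where C: "is_chain W R C" "finite C" "1 < enat (card C) - 1"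
    unfolding height_def by (auto simp: less_Sup_iff)
  then have "3 \<le> card C" by (simp add: one_enat_def idiff_enat_enat)
  with C that show ?thesis by blast
qed

lemma top_in_sup_set_root:
  assumes "rooted_at W R r" "height W R > 1" "is_top W R x"
  shows "x \<in> sup_set W R r"
proof -
  obtain C where C: "is_chain W R C" "finite C" "3 \<le> card C"
    using height_gt_1_obtain_chain[OF assms(2)] .
  have "x \<noteq> r"
  proof
    assume "x = r"
    then have "C \<subseteq> {r}" using assms(1,3) C(1) unfolding rooted_at_def is_top_def is_chain_def by blast
    then show False using card_mono[of "{r}" C] C(3) by simp
  qed
  then show ?thesis using assms(1,3) unfolding rooted_at_def is_top_def sup_set_def less_in_def by simp
qed

lemma sup_set_root_ne_pair_of_tops:
  assumes "rooted_at W R r" "height W R > 1"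
    and "is_top W R u" "is_top W R v" "u \<noteq> v"
  shows "sup_set W R r \<noteq> {u, v}"
proof
  assume sup: "sup_set W R r = {u, v}"
  obtain C where C: "is_chain W R C" "finite C" "3 \<le> card C"
    using height_gt_1_obtain_chain[OF assms(2)] .
  have "W \<subseteq> {r, u, v}" using assms(1) sup unfolding rooted_at_def sup_set_def less_in_def by blast
  then have sub: "C \<subseteq> {r, u, v}" using C(1) unfolding is_chain_def by blast
  have "card {r, u, v} \<le> 3" by (simp add: card_insert_le_m1)
  then have "C = {r, u, v}"
    using card_subset_eq[OF _ sub] card_mono[OF _ sub] C(3) by fastforce
  then have "R u v \<or> R v u" using C(1) unfolding is_chain_def by blast
  then show False using assms(3-5) unfolding is_top_def by blast
qed

lemma has_up_reduction_from_cone: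
  assumes po: "poset W R" and y: "y \<in> W" and root: "rooted_at V S q"
    and fy: "f y = q" and img: "f ` sup_set W R y = V - {q}"
    and cone: "\<And>x. x \<in> sup_set W R y \<Longrightarrow> f ` up_set W R x = up_set V S (f x)"
  shows "has_up_reduction W R V S"
proof -
  define U where "U = up_set W R y"
  have U: "is_upset W R U" using is_upset_up_set[OF po y] unfolding U_def .
  have U_eq: "U = insert y (sup_set W R y)" using up_set_eq_insert_sup_set[OF po y] unfolding U_def .
  then have fU: "f ` U = V" using fy img root unfolding rooted_at_def by auto
  have "f ` up_set U R x = up_set V S (f x)" if "x \<in> U" for x
  proof (cases "x = y")
    case True
    then show ?thesis using fU fy root unfolding U_def up_set_def rooted_at_def by auto
  next
    case False
    then show ?thesis using cone U_eq that up_set_within_upset[OF U that] by auto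
  qed
  then have "p_morphism U R V S f" unfolding p_morphism_def using fU by blast
  then show ?thesis unfolding has_up_reduction_def up_reduction_def using U fU by blast
qed

lemma up_set_fork3_nonroot: "k \<in> {1, 2, 3} \<Longrightarrow> up_set fork3_W fork3_R k = {k}"
  unfolding up_set_def fork3_W_def fork3_R_def by auto

lemma fork3_up_reduction:
  assumes po: "poset W R" and y: "y \<in> W"
    and tops: "\<forall>w\<in>sup_set W R y. is_top W R w"
    and abc: "a \<in> sup_set W R y" "b \<in> sup_set W R y" "c \<in> sup_set W R y"
    and distinct: "a \<noteq> b" "a \<noteq> c" "b \<noteq> c"
  shows "has_up_reduction W R fork3_W fork3_R"
proof -
  define f where "f w = (if w = y then 0 else if w = a then 1 else if w = b then 2 else 3 :: nat)"
    for w
  have y_sup: "y \<notin> sup_set W R y" unfolding sup_set_def less_in_def by simp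
  have root: "rooted_at fork3_W fork3_R 0" unfolding rooted_at_def fork3_W_def fork3_R_def by simp
  have fy: "f y = 0" unfolding f_def by simp
  have nonroot: "f x \<in> {1, 2, 3}" if "x \<in> sup_set W R y" for x
    using that y_sup unfolding f_def by auto
  have "f a = 1" "f b = 2" "f c = 3" using abc y_sup distinct unfolding f_def by auto
  then have "{1, 2, 3} \<subseteq> f ` sup_set W R y" using abc by (metis empty_subsetI image_eqI insert_subset)
  with nonroot have img: "f ` sup_set W R y = fork3_W - {0}" unfolding fork3_W_def by auto
  have "f ` up_set W R x = up_set fork3_W fork3_R (f x)" if "x \<in> sup_set W R y" for x
    using up_set_top[OF po, of x] tops that up_set_fork3_nonroot[OF nonroot[OF that]] by simp
  then show ?thesis by (rule has_up_reduction_from_cone[OF po y root fy img])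
qed

lemma up_set_scott_nonroot:
  "up_set scott_W scott_R 1 = {1, 2}" "up_set scott_W scott_R 2 = {2}" "up_set scott_W scott_R 3 = {3}"
  unfolding up_set_def scott_W_def scott_R_def by auto

lemma scott_up_reduction:
  assumes fin: "finite W" and po: "poset W R" and y: "y \<in> W"
    and split: "X \<union> Y = sup_set W R y" "X \<inter> Y = {}"
    and upsets: "is_upset W R X" "is_upset W R Y"
    and z: "z \<in> X" "\<not> is_top W R z" and "Y \<noteq> {}"
  shows "has_up_reduction W R scott_W scott_R"
proof -
  define f where
    "f w = (if w = y then 0 else if w \<in> X then if is_top W R w then 2 else 1 else 3 :: nat)" for w
  have y_XY: "y \<notin> X" "y \<notin> Y" using split unfolding sup_set_def less_in_def by auto
  have root: "rooted_at scott_W scott_R 0" unfolding rooted_at_def scott_W_def scott_R_def by simp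
  have fy: "f y = 0" unfolding f_def by simp
  obtain tz where tz: "tz \<in> X" "is_top W R tz"
    using finite_poset_top_in_upset[OF fin po upsets(1) z(1)] by blast
  obtain w where w: "w \<in> Y" using \<open>Y \<noteq> {}\<close> by blast
  have nonroot: "f x \<in> {1, 2, 3}" if "x \<in> sup_set W R y" for x
    using that y_XY split unfolding f_def by auto
  have "f z = 1" "f tz = 2" "f w = 3" using y_XY z tz w split(2) unfolding f_def by auto
  then have "{1, 2, 3} \<subseteq> f ` sup_set W R y"
    using z tz w split(1) by (metis Un_iff empty_subsetI image_eqI insert_subset)
  with nonroot have img: "f ` sup_set W R y = scott_W - {0}" unfolding scott_W_def by auto
  have "f ` up_set W R x = up_set scott_W scott_R (f x)" if "x \<in> sup_set W R y" for x
  proof -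
    have x_up: "x \<in> up_set W R x"
      using that poset_refl[OF po, of x] unfolding sup_set_def up_set_def by simp
    have "x \<in> X \<or> x \<in> Y" using that split(1) by blast
    then consider "x \<in> X" "is_top W R x" | "x \<in> X" "\<not> is_top W R x" | "x \<in> Y" by blast
    then show ?thesis
    proof cases
      case 1
      then have "f x = 2" using y_XY unfolding f_def by auto
      then show ?thesis using up_set_top[OF po 1(2)] up_set_scott_nonroot by simp
    next
      case 2
      then have "f x = 1" using y_XY unfolding f_def by auto
      obtain t where t: "t \<in> X" "is_top W R t" "R x t"
        using finite_poset_top_in_upset[OF fin po upsets(1) 2(1)] .
      have "up_set W R x \<subseteq> X" using up_set_subset_upset[OF upsets(1) 2(1)] .
      then have "f ` up_set W R x \<subseteq> {1, 2}" using y_XY unfolding f_def by auto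
      moreover have "t \<in> up_set W R x" using t unfolding is_top_def up_set_def by blast
      moreover have "f t = 2" using t y_XY unfolding f_def by auto
      ultimately have "f ` up_set W R x = {1, 2}" using x_up \<open>f x = 1\<close> by force
      then show ?thesis using \<open>f x = 1\<close> up_set_scott_nonroot by simp
    next
      case 3
      have "up_set W R x \<subseteq> Y" using up_set_subset_upset[OF upsets(2) 3] .
      then have "\<forall>w\<in>up_set W R x. f w = 3" using y_XY split(2) unfolding f_def by auto
      then have "f ` up_set W R x = {3}" "f x = 3" using x_up by force+
      then show ?thesis using up_set_scott_nonroot by simp
    qed
  qed
  then show ?thesis by (rule has_up_reduction_from_cone[OF po y root fy img])
qed

lemma split_sup_set_is_fork:
  assumes fin: "finite W" and po: "poset W R" and y: "y \<in> W"
    and no_fork: "\<not> has_up_reduction W R fork3_W fork3_R"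
    and no_scott: "\<not> has_up_reduction W R scott_W scott_R"
    and split: "X \<union> Y = sup_set W R y" "X \<inter> Y = {}"
    and upsets: "is_upset W R X" "is_upset W R Y"
    and a: "a \<in> X" and b: "b \<in> Y"
  shows "sup_set W R y = {a, b}"
proof -
  have split': "Y \<union> X = sup_set W R y" "Y \<inter> X = {}" using split by auto
  have tops: "\<forall>w\<in>sup_set W R y. is_top W R w"
  proof
    fix w assume "w \<in> sup_set W R y"
    then have "w \<in> X \<or> w \<in> Y" using split(1) by blast
    then show "is_top W R w"
      using scott_up_reduction[OF fin po y split upsets, of w]
        scott_up_reduction[OF fin po y split' upsets(2,1), of w] a b no_scott
      by auto
  qed
  have ab: "a \<in> sup_set W R y" "b \<in> sup_set W R y" "a \<noteq> b" using split a b by auto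
  have "sup_set W R y \<subseteq> {a, b}"
    using fork3_up_reduction[OF po y tops ab(1,2) _ ab(3)] no_fork by blast
  with ab show ?thesis by blast
qed

lemma fork_closed_set_contains_all_tops:
  assumes fin: "finite W" and po: "poset W R" and root: "rooted_at W R r"
    and height: "height W R > 1"
    and no_fork: "\<not> has_up_reduction W R fork3_W fork3_R"
    and no_scott: "\<not> has_up_reduction W R scott_W scott_R"
    and A_tops: "\<forall>u\<in>A. is_top W R u" and "a \<in> A"
    and fork_closed: "\<And>y u v. y \<in> sup_set W R r \<Longrightarrow> sup_set W R y = {u, v} \<Longrightarrow>
      u \<in> A \<Longrightarrow> is_top W R v \<Longrightarrow> v \<in> A"
    and t: "is_top W R t"
  shows "t \<in> A"
proof (rule ccontr)
  assume "t \<notin> A"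
  define mixed where "mixed w \<longleftrightarrow> (\<exists>u\<in>A. R w u) \<and> (\<exists>v. is_top W R v \<and> v \<notin> A \<and> R w v)"
    for w
  have "r \<in> W" "mixed r"
    using root \<open>a \<in> A\<close> A_tops t \<open>t \<notin> A\<close> unfolding rooted_at_def mixed_def is_top_def by blast+
  then obtain y where y: "y \<in> W" "mixed y" and maximal: "\<forall>z\<in>sup_set W R y. \<not> mixed z"
    using finite_poset_obtain_maximal[OF fin po] by metis
  obtain u v where u: "u \<in> A" "R y u" and v: "is_top W R v" "v \<notin> A" "R y v"
    using y(2) unfolding mixed_def by blast
  have "is_top W R u" using u A_tops by blast
  then have "y \<noteq> u" "y \<noteq> v" using u v unfolding is_top_def by metis+
  then have uv_sup: "u \<in> sup_set W R y" "v \<in> sup_set W R y"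
    using u v \<open>is_top W R u\<close> unfolding is_top_def sup_set_def less_in_def by blast+
  define X where "X = {w \<in> sup_set W R y. \<forall>t. is_top W R t \<and> R w t \<longrightarrow> t \<in> A}"
  define Y where "Y = sup_set W R y - X"
  have sup_upset: "is_upset W R (sup_set W R y)" using is_upset_sup_set[OF po y(1)] .
  have split: "X \<union> Y = sup_set W R y" "X \<inter> Y = {}" unfolding X_def Y_def by auto
  have X_upset: "is_upset W R X"
    using sup_upset poset_trans[OF po] unfolding is_upset_def X_def is_top_def by blast
  have Y_upset: "is_upset W R Y"
    unfolding is_upset_def
  proof (intro conjI ballI impI)
    show "Y \<subseteq> W" using sup_upset unfolding Y_def is_upset_def by blast
    fix w w' assume w: "w \<in> Y" and w': "w' \<in> W" "R w w'"
    have "w \<in> W" using \<open>Y \<subseteq> W\<close> w by blast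
    have no_A_above_w: "\<not> (\<exists>u\<in>A. R w u)"
      using w maximal unfolding Y_def X_def mixed_def by blast
    obtain t where "is_top W R t" "R w' t" using finite_poset_top_above[OF fin po w'(1)] .
    moreover have "R w t" using poset_trans[OF po \<open>w \<in> W\<close> w'(1)] calculation w' unfolding is_top_def by blast
    ultimately have "w' \<notin> X" using no_A_above_w unfolding X_def by blast
    then show "w' \<in> Y" using sup_upset w w' unfolding Y_def is_upset_def by blast
  qed
  have "u \<in> X" using uv_sup(1) u(1) \<open>is_top W R u\<close> unfolding X_def is_top_def by auto
  moreover have "v \<in> Y"
    using uv_sup(2) v poset_refl[OF po, of v] unfolding X_def Y_def is_top_def by auto
  ultimately have fork: "sup_set W R y = {u, v}"
    using split_sup_set_is_fork[OF fin po y(1) no_fork no_scott split X_upset Y_upset] by blast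
  have "y \<noteq> r"
    using sup_set_root_ne_pair_of_tops[OF root height \<open>is_top W R u\<close> v(1)] fork u v by blast
  then have "y \<in> sup_set W R r" using root y(1) unfolding rooted_at_def sup_set_def less_in_def by simp
  then show False using fork_closed[OF _ fork u(1) v(1)] v(2) by blast
qed

definition zigzag_path :: "'a set \<Rightarrow> ('a \<Rightarrow> 'a \<Rightarrow> bool) \<Rightarrow> 'a \<Rightarrow> 'a \<Rightarrow> 'a \<Rightarrow> bool" where
  "zigzag_path W R r s t \<longleftrightarrow> (\<exists>(a :: nat \<Rightarrow> 'a) m. a 0 = s \<and> a m = t
      \<and> (\<forall>i\<le>m. a i \<in> sup_set W R r)
      \<and> (\<forall>i<m. less_in R (a i) (a (Suc i)) \<or> less_in R (a (Suc i)) (a i))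
      \<and> (\<forall>i\<le>m. even i \<longrightarrow> sup_set W R (a i) = {})
      \<and> (\<forall>i\<le>m. odd i \<longrightarrow> sup_set W R (a i) = {a (i - 1), a (i + 1)}))"

lemma zigzag_path_refl: "is_top W R s \<Longrightarrow> s \<in> sup_set W R r \<Longrightarrow> zigzag_path W R r s s"
  unfolding zigzag_path_def
  by (rule exI[of _ "\<lambda>_. s"], rule exI[of _ 0]) (auto simp: sup_set_top)

lemma zigzag_path_extend:
  assumes path: "zigzag_path W R r s u" and u: "is_top W R u" and v: "is_top W R v"
    and y: "y \<in> sup_set W R r" and v_sup: "v \<in> sup_set W R r"
    and fork: "sup_set W R y = {u, v}"
  shows "zigzag_path W R r s v"
proof -
  obtain a m where a: "a 0 = s" "a m = u"
      "\<forall>i\<le>m. a i \<in> sup_set W R r"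
      "\<forall>i<m. less_in R (a i) (a (Suc i)) \<or> less_in R (a (Suc i)) (a i)"
      "\<forall>i\<le>m. even i \<longrightarrow> sup_set W R (a i) = {}"
      "\<forall>i\<le>m. odd i \<longrightarrow> sup_set W R (a i) = {a (i - 1), a (i + 1)}"
    using path unfolding zigzag_path_def by blast
  have "even m" using a(2,6) sup_set_top[OF u] by auto
  have yu: "less_in R y u" "less_in R y v" using fork unfolding sup_set_def by auto
  define b where "b = a(Suc m := y, Suc (Suc m) := v)"
  have b: "\<And>i. i \<le> m \<Longrightarrow> b i = a i" "b (Suc m) = y" "b (Suc (Suc m)) = v"
    unfolding b_def by auto
  show ?thesis unfolding zigzag_path_def
  proof (intro exI[of _ b] exI[of _ "Suc (Suc m)"] conjI allI impI)
    show "b 0 = s" "b (Suc (Suc m)) = v" using a(1) b by auto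
  next
    fix i assume "i \<le> Suc (Suc m)"
    then consider "i \<le> m" | "i = Suc m" | "i = Suc (Suc m)" by linarith
    then show "b i \<in> sup_set W R r" using a(3) b y v_sup by cases auto
  next
    fix i assume "i < Suc (Suc m)"
    then consider "i < m" | "i = m" | "i = Suc m" by linarith
    then show "less_in R (b i) (b (Suc i)) \<or> less_in R (b (Suc i)) (b i)"
      using a(2,4) b yu by cases auto
  next
    fix i assume "i \<le> Suc (Suc m)" "even i"
    moreover have "i \<noteq> Suc m" using \<open>even m\<close> \<open>even i\<close> by auto
    ultimately consider "i \<le> m" | "i = Suc (Suc m)" by linarith
    then show "sup_set W R (b i) = {}" using a(5) b sup_set_top[OF v] \<open>even i\<close> by cases auto
  next
    fix i assume "i \<le> Suc (Suc m)" "odd i"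
    moreover have "i \<noteq> m" "i \<noteq> Suc (Suc m)" using \<open>even m\<close> \<open>odd i\<close> by auto
    ultimately consider "i < m" | "i = Suc m" by linarith
    then show "sup_set W R (b i) = {b (i - 1), b (i + 1)}"
      using a(2,6) b fork \<open>odd i\<close> by cases auto
  qed
qed

theorem lemma7p4:
  fixes W :: "'a set" and R :: "'a \<Rightarrow> 'a \<Rightarrow> bool" and bot s t :: 'a and n :: nat
  assumes "finite W" and "poset W R" and "rooted_at W R bot"
    and "height W R > 1"
    and "validates_PL n W R"
    and "is_top W R s" and "is_top W R t"
  shows "\<exists>(a :: nat \<Rightarrow> 'a) m. a 0 = s \<and> a m = t
      \<and> (\<forall>i\<le>m. a i \<in> sup_set W R bot)
      \<and> (\<forall>i<m. less_in R (a i) (a (Suc i)) \<or> less_in R (a (Suc i)) (a i))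
      \<and> (\<forall>i\<le>m. even i \<longrightarrow> sup_set W R (a i) = {})
      \<and> (\<forall>i\<le>m. odd i \<longrightarrow> sup_set W R (a i) = {a (i - 1), a (i + 1)})"
proof -
  have no_fork: "\<not> has_up_reduction W R fork3_W fork3_R"
    and no_scott: "\<not> has_up_reduction W R scott_W scott_R"
    using assms(5) unfolding validates_PL_def by auto
  have tops_above_root: "\<And>x. is_top W R x \<Longrightarrow> x \<in> sup_set W R bot"
    using top_in_sup_set_root[OF assms(3,4)] .
  define A where "A = {u. is_top W R u \<and> zigzag_path W R bot s u}"
  have A_tops: "\<forall>u\<in>A. is_top W R u" unfolding A_def by simp
  have "s \<in> A" using zigzag_path_refl[OF assms(6) tops_above_root[OF assms(6)]] assms(6)
    unfolding A_def by simp
  moreover have "v \<in> A"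
    if "y \<in> sup_set W R bot" "sup_set W R y = {u, v}" "u \<in> A" "is_top W R v" for y u v
    using that zigzag_path_extend[OF _ _ that(4,1) tops_above_root[OF that(4)] that(2)]
    unfolding A_def by simp
  ultimately have "t \<in> A"
    using fork_closed_set_contains_all_tops[OF assms(1-4) no_fork no_scott A_tops] assms(7)
    by blast
  then show ?thesis unfolding A_def zigzag_path_def by simp
qed

end
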